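(* Let $(X,\rho)$ be a metric space, $f\colon[0,\infty)\to[0,\infty)$ an unbounded modulus, $(A_i)\subset CL(X)$ and $A\in CL(X)$. Then $(A_i)$ is $f$-Wijsman statistically convergent to $A$ if and only if for each $x\in X$ there exists $K_x\subseteq\mathbb N$ such that $d^f(K_x)=0$ and $\lim_{i\to\infty,\ i\in\mathbb N\setminus K_x} d(x,A_i)=d(x,A)$.
   Context: A modulus is a function $f\colon[0,\infty)\to[0,\infty)$ such that $f(x)=0$ iff $x=0$, $f$ is subadditive, increasing and continuous. $CL(X)$ denotes the set of all non-empty closed subsets of $(X,\rho)$, and $d(x,B)=\inf_{y\in B}\rho(x,y)$. For an unbounded modulus $f$ and $K\subseteq\mathbb N$, the $f$-density is $d^f(K)=\lim_{n\to\infty}\frac{f(|\{k\le n:k\in K\}|)}{f(n)}$ (when the limit exists). A real sequence $(x_k)$ is $f$-statistically convergent to $l$ if for every $\varepsilon>0$ the set $\{k:|x_k-l|\ge\varepsilon\}$ has $f$-density $0$. $(A_i)$ is $f$-Wijsman statistically convergent to $A$ if for every $x\in X$ the sequence $(d(x,A_i))$ is $f$-statistically convergent to $d(x,A)$. *)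

theory Defs
  imports "HOL-Analysis.Analysis"
begin

definition modulus :: "(real \<Rightarrow> real) \<Rightarrow> bool" where
  "modulus f \<longleftrightarrow>
     (\<forall>x\<ge>0. f x \<ge> 0) \<and>
     (\<forall>x\<ge>0. f x = 0 \<longleftrightarrow> x = 0) \<and>
     (\<forall>x\<ge>0. \<forall>y\<ge>0. f (x + y) \<le> f x + f y) \<and>
     mono_on {0..} f \<and>
     continuous_on {0..} f"

definition unbounded_modulus :: "(real \<Rightarrow> real) \<Rightarrow> bool" where
  "unbounded_modulus f \<longleftrightarrow> modulus f \<and> \<not> bdd_above (f ` {0..})"

definition has_f_density :: "(real \<Rightarrow> real) \<Rightarrow> nat set \<Rightarrow> real \<Rightarrow> bool" where
  "has_f_density f K d \<longleftrightarrow>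
     ((\<lambda>n. f (real (card {k \<in> K. k \<le> n})) / f (real n)) \<longlonglongrightarrow> d)"

definition f_stat_convergent :: "(real \<Rightarrow> real) \<Rightarrow> (nat \<Rightarrow> real) \<Rightarrow> real \<Rightarrow> bool" where
  "f_stat_convergent f x l \<longleftrightarrow>
     (\<forall>\<epsilon>>0. has_f_density f {k. \<bar>x k - l\<bar> \<ge> \<epsilon>} 0)"

definition f_wijsman_stat_convergent ::
  "(real \<Rightarrow> real) \<Rightarrow> (nat \<Rightarrow> 'a::metric_space set) \<Rightarrow> 'a set \<Rightarrow> bool" where
  "f_wijsman_stat_convergent f As A \<longleftrightarrow>
     (\<forall>x. f_stat_convergent f (\<lambda>i. infdist x (As i)) (infdist x A))"

end

theory Submission
  imports Defs
begin

text \<open>For a real sequence the theorem is the \<open>f\<close>-density analogue of the classical fact that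
  statistical convergence means convergence off a set of density zero. One direction is immediate,
  since the exceptional set \<open>{k. \<bar>x k - l\<bar> \<ge> \<epsilon>}\<close> lies in the density-zero set up to finitely
  many indices. For the other, the exceptional sets \<open>S j\<close> for \<open>\<epsilon> = 1/(j+1)\<close> increase with \<open>j\<close>;
  gluing the tails of \<open>S j\<close> beyond thresholds \<open>N j\<close>, chosen so that the density quotient of \<open>S j\<close>
  is already below \<open>1/(j+1)\<close> there, gives a single set of \<open>f\<close>-density zero off which the
  sequence converges. Wijsman convergence is this statement for every \<open>x\<close>.\<close>

lemma modulus_nonneg: "modulus f \<Longrightarrow> x \<ge> 0 \<Longrightarrow> f x \<ge> 0"
  unfolding modulus_def by auto

lemma modulus_subadditive: "modulus f \<Longrightarrow> x \<ge> 0 \<Longrightarrow> y \<ge> 0 \<Longrightarrow> f (x + y) \<le> f x + f y"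
  unfolding modulus_def by auto

lemma modulus_mono: "modulus f \<Longrightarrow> x \<ge> 0 \<Longrightarrow> x \<le> y \<Longrightarrow> f x \<le> f y"
  unfolding modulus_def by (auto intro: mono_onD)

lemma unbounded_modulus_imp_modulus: "unbounded_modulus f \<Longrightarrow> modulus f"
  unfolding unbounded_modulus_def by simp

lemma unbounded_modulus_filterlim_at_top:
  assumes "unbounded_modulus f"
  shows "filterlim f at_top at_top"
  unfolding filterlim_at_top eventually_at_top_linorder
proof
  fix B
  have f: "modulus f" and "\<not> bdd_above (f ` {0..})"
    using assms unfolding unbounded_modulus_def by auto
  then obtain y where "y \<ge> 0" "f y > B"
    unfolding bdd_above_def by (auto simp: not_le)
  then have "\<forall>x\<ge>y. B \<le> f x"
    using modulus_mono[OF f] by force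
  then show "\<exists>y0. \<forall>x\<ge>y0. B \<le> f x" ..
qed

definition f_density_ratio :: "(real \<Rightarrow> real) \<Rightarrow> nat set \<Rightarrow> nat \<Rightarrow> real" where
  "f_density_ratio f K n = f (real (card {k \<in> K. k \<le> n})) / f (real n)"

lemma has_f_density_iff_ratio: "has_f_density f K d \<longleftrightarrow> f_density_ratio f K \<longlonglongrightarrow> d"
  by (simp add: has_f_density_def f_density_ratio_def[abs_def])

lemma f_density_ratio_nonneg:
  assumes "modulus f"
  shows "f_density_ratio f K n \<ge> 0"
  unfolding f_density_ratio_def by (simp add: modulus_nonneg[OF assms])

lemma f_density_ratio_mono:
  assumes f: "modulus f" and sub: "{k \<in> E. k \<le> n} \<subseteq> {k \<in> K. k \<le> n}"
  shows "f_density_ratio f E n \<le> f_density_ratio f K n"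
proof -
  have "card {k \<in> E. k \<le> n} \<le> card {k \<in> K. k \<le> n}"
    by (rule card_mono[OF _ sub]) auto
  then have "f (real (card {k \<in> E. k \<le> n})) \<le> f (real (card {k \<in> K. k \<le> n}))"
    by (intro modulus_mono[OF f]) auto
  then show ?thesis
    unfolding f_density_ratio_def by (simp add: divide_right_mono modulus_nonneg[OF f])
qed

lemma f_density_ratio_Un_lessThan_le:
  assumes f: "modulus f"
  shows "f_density_ratio f (K \<union> {..<N}) n \<le> f_density_ratio f K n + f (real N) / f (real n)"
proof -
  have "card {k \<in> K \<union> {..<N}. k \<le> n} \<le> card ({k \<in> K. k \<le> n} \<union> {..<N})"
    by (rule card_mono) auto
  also have "\<dots> \<le> card {k \<in> K. k \<le> n} + N"
    using card_Un_le[of "{k \<in> K. k \<le> n}" "{..<N}"] by simp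
  finally have "f (real (card {k \<in> K \<union> {..<N}. k \<le> n}))
      \<le> f (real (card {k \<in> K. k \<le> n}) + real N)"
    by (intro modulus_mono[OF f]) auto
  also have "\<dots> \<le> f (real (card {k \<in> K. k \<le> n})) + f (real N)"
    by (intro modulus_subadditive[OF f]) auto
  finally show ?thesis
    unfolding f_density_ratio_def
    by (simp add: divide_right_mono modulus_nonneg[OF f] add_divide_distrib[symmetric])
qed

lemma has_f_density_0_subset:
  assumes f: "modulus f" and K: "has_f_density f K 0" and "E \<subseteq> K"
  shows "has_f_density f E 0"
  unfolding has_f_density_iff_ratio
proof (rule tendsto_sandwich[OF _ _ tendsto_const K[unfolded has_f_density_iff_ratio]])
  show "\<forall>\<^sub>F n in sequentially. f_density_ratio f E n \<le> f_density_ratio f K n"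
    using \<open>E \<subseteq> K\<close> by (intro always_eventually allI f_density_ratio_mono[OF f]) auto
qed (simp add: f_density_ratio_nonneg[OF f])

lemma has_f_density_0_Un_lessThan:
  assumes f: "unbounded_modulus f" and K: "has_f_density f K 0"
  shows "has_f_density f (K \<union> {..<N}) 0"
proof -
  note m = unbounded_modulus_imp_modulus[OF f]
  have "(\<lambda>n. f (real N) / f (real n)) \<longlonglongrightarrow> 0"
    using filterlim_compose[OF unbounded_modulus_filterlim_at_top[OF f] filterlim_real_sequentially]
    by (intro tendsto_divide_0[OF tendsto_const] filterlim_at_top_imp_at_infinity) (simp add: o_def)
  then have upper: "(\<lambda>n. f_density_ratio f K n + f (real N) / f (real n)) \<longlonglongrightarrow> 0"
    using K tendsto_add[of _ 0 _ _ 0] unfolding has_f_density_iff_ratio by fastforce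
  show ?thesis
    unfolding has_f_density_iff_ratio
  proof (rule tendsto_sandwich[OF _ _ tendsto_const upper])
    show "\<forall>\<^sub>F n in sequentially.
        f_density_ratio f (K \<union> {..<N}) n \<le> f_density_ratio f K n + f (real N) / f (real n)"
      by (intro always_eventually allI f_density_ratio_Un_lessThan_le[OF m])
  qed (simp add: f_density_ratio_nonneg[OF m])
qed

lemma has_f_density_0_incseq_almost_cover:
  assumes f: "modulus f" and S: "incseq S" and dS: "\<And>j. has_f_density f (S j) 0"
  obtains K where "has_f_density f K 0" and "\<And>j. \<exists>N. \<forall>k\<ge>N. k \<in> S j \<longrightarrow> k \<in> K"
proof -
  have "\<forall>j. \<exists>M. \<forall>n\<ge>M. f_density_ratio f (S j) n < 1 / real (Suc j)"
  proof
    fix j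
    have "\<forall>\<^sub>F n in sequentially. f_density_ratio f (S j) n < 1 / real (Suc j)"
      using dS[of j] unfolding has_f_density_iff_ratio by (rule order_tendstoD(2)) simp
    then show "\<exists>M. \<forall>n\<ge>M. f_density_ratio f (S j) n < 1 / real (Suc j)"
      unfolding eventually_sequentially .
  qed
  then obtain M where M: "\<forall>j. \<forall>n\<ge>M j. f_density_ratio f (S j) n < 1 / real (Suc j)"
    by (rule choice[THEN exE])
  define N where "N j = max j (M j)" for j
  define K where "K = {k. \<exists>j. N j \<le> k \<and> k \<in> S j}"
  have "has_f_density f K 0"
    unfolding has_f_density_iff_ratio
  proof (rule LIMSEQ_I)
    fix e :: real
    assume "e > 0"
    then obtain j0 where j0: "inverse (real (Suc j0)) < e"
      using reals_Archimedean by blast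
    show "\<exists>n0. \<forall>n\<ge>n0. norm (f_density_ratio f K n - 0) < e"
    proof (intro exI allI impI)
      fix n
      assume n: "N j0 \<le> n"
      \<comment> \<open>the last chain member whose tail has already started by time \<open>n\<close> dominates \<open>K\<close> up to \<open>n\<close>\<close>
      define J where "J = {j. N j \<le> n}"
      define j where "j = Max J"
      have "J \<subseteq> {..n}"
        by (auto simp: J_def N_def)
      then have J: "finite J" "j0 \<in> J"
        using n finite_subset by (auto simp: J_def)
      then have "j \<in> J" "j0 \<le> j"
        unfolding j_def using Max_in by auto
      have "{k \<in> K. k \<le> n} \<subseteq> {k \<in> S j. k \<le> n}"
      proof safe
        fix k
        assume "k \<in> K" "k \<le> n"
        then obtain i where "N i \<le> k" "k \<in> S i"
          unfolding K_def by blast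
        then have "i \<le> j"
          using J \<open>k \<le> n\<close> by (simp add: j_def J_def)
        with \<open>k \<in> S i\<close> show "k \<in> S j"
          using S by (auto dest: monoD)
      qed
      then have "f_density_ratio f K n \<le> f_density_ratio f (S j) n"
        by (rule f_density_ratio_mono[OF f])
      also have "\<dots> < 1 / real (Suc j)"
        using M \<open>j \<in> J\<close> by (auto simp: J_def N_def)
      also have "\<dots> \<le> inverse (real (Suc j0))"
        using \<open>j0 \<le> j\<close> by (simp add: frac_le inverse_eq_divide)
      finally show "norm (f_density_ratio f K n - 0) < e"
        using j0 f_density_ratio_nonneg[OF f, of K n] by simp
    qed
  qed
  moreover have "\<exists>N. \<forall>k\<ge>N. k \<in> S j \<longrightarrow> k \<in> K" for j
    by (rule exI[of _ "N j"]) (auto simp: K_def)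
  ultimately show thesis
    by (rule that)
qed

lemma f_stat_convergent_iff_tendsto_off_density_0:
  fixes x :: "nat \<Rightarrow> real"
  assumes f: "unbounded_modulus f"
  shows "f_stat_convergent f x l \<longleftrightarrow>
    (\<exists>K. has_f_density f K 0 \<and> (x \<longlongrightarrow> l) (inf sequentially (principal (UNIV - K))))"
proof
  note m = unbounded_modulus_imp_modulus[OF f]
  assume stat: "f_stat_convergent f x l"
  define S where "S j = {k. 1 / real (Suc j) \<le> \<bar>x k - l\<bar>}" for j
  have "incseq S"
  proof (rule monoI, safe)
    fix i j k
    assume "i \<le> j" "k \<in> S i"
    moreover have "1 / real (Suc j) \<le> 1 / real (Suc i)"
      using \<open>i \<le> j\<close> by (simp add: frac_le)
    ultimately show "k \<in> S j" by (auto simp: S_def)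
  qed
  moreover have "has_f_density f (S j) 0" for j
    using stat unfolding f_stat_convergent_def S_def by simp
  ultimately obtain K where K: "has_f_density f K 0"
    and cover: "\<And>j. \<exists>N. \<forall>k\<ge>N. k \<in> S j \<longrightarrow> k \<in> K"
    using has_f_density_0_incseq_almost_cover[OF m] by metis
  have "(x \<longlongrightarrow> l) (inf sequentially (principal (UNIV - K)))"
    unfolding tendsto_iff eventually_inf_principal eventually_sequentially
  proof (intro allI impI)
    fix e :: real
    assume "e > 0"
    then obtain j where j: "inverse (real (Suc j)) < e"
      using reals_Archimedean by blast
    obtain N where "\<forall>k\<ge>N. k \<in> S j \<longrightarrow> k \<in> K"
      using cover by blast
    then have "\<forall>i\<ge>N. i \<in> UNIV - K \<longrightarrow> \<bar>x i - l\<bar> < 1 / real (Suc j)"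
      by (auto simp: S_def not_le)
    then have "\<forall>i\<ge>N. i \<in> UNIV - K \<longrightarrow> dist (x i) l < e"
      using j by (auto simp: dist_real_def inverse_eq_divide)
    then show "\<exists>N. \<forall>i\<ge>N. i \<in> UNIV - K \<longrightarrow> dist (x i) l < e" ..
  qed
  with K show "\<exists>K. has_f_density f K 0 \<and> (x \<longlongrightarrow> l) (inf sequentially (principal (UNIV - K)))"
    by blast
next
  note m = unbounded_modulus_imp_modulus[OF f]
  assume "\<exists>K. has_f_density f K 0 \<and> (x \<longlongrightarrow> l) (inf sequentially (principal (UNIV - K)))"
  then obtain K where K: "has_f_density f K 0"
    and lim: "(x \<longlongrightarrow> l) (inf sequentially (principal (UNIV - K)))"
    by blast
  show "f_stat_convergent f x l"
    unfolding f_stat_convergent_def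
  proof (intro allI impI)
    fix e :: real
    assume "e > 0"
    then obtain N where "\<forall>i\<ge>N. i \<in> UNIV - K \<longrightarrow> dist (x i) l < e"
      using lim unfolding tendsto_iff eventually_inf_principal eventually_sequentially by blast
    then have "{k. e \<le> \<bar>x k - l\<bar>} \<subseteq> K \<union> {..<N}"
      by (auto simp: dist_real_def not_less[symmetric])
    then show "has_f_density f {k. e \<le> \<bar>x k - l\<bar>} 0"
      using has_f_density_0_subset[OF m has_f_density_0_Un_lessThan[OF f K]] by blast
  qed
qed

theorem theorem2p10:
  fixes f :: "real \<Rightarrow> real"
    and As :: "nat \<Rightarrow> 'a::metric_space set"
    and A :: "'a set"
  assumes "unbounded_modulus f"
    and "\<And>i. closed (As i) \<and> As i \<noteq> {}"
    and "closed A" and "A \<noteq> {}"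
  shows "f_wijsman_stat_convergent f As A \<longleftrightarrow>
    (\<forall>x. \<exists>K. has_f_density f K 0 \<and>
        ((\<lambda>i. infdist x (As i)) \<longlongrightarrow> infdist x A)
          (inf sequentially (principal (UNIV - K))))"
  unfolding f_wijsman_stat_convergent_def
  using f_stat_convergent_iff_tendsto_off_density_0[OF assms(1)] by blast

end
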